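(* Let $F:\mathbb{R}^d\to\mathbb{R}^d$ be $L$-Lipschitz, $G:\mathbb{R}^d\rightrightarrows\mathbb{R}^d$ maximally monotone, the solution set of $0\in F(x)+G(x)$ nonempty, and suppose there is a nonempty subset of solutions each element $x^\star$ of which satisfies $\langle u,x-x^\star\rangle\ge-\rho\|u\|^2$ for all $(x,u)$ in the graph of $F+G$, with $\rho>0$. Let $\eta<\frac1L$, $\rho<\eta$, $x^\star$ such a solution, and $(x_k)$ generated by the inexact KM iteration in the context. Then for any $\varepsilon>0$, for some $K\le\left\lceil\frac{11\|x_0-x^\star\|^2}{(\eta-\rho)^2\varepsilon^2}\right\rceil$ there is $x^{\mathrm{out}}\in\{x_0,\dots,x_{K-1}\}$ with $\eta^{-1}\|(\mathrm{Id}-J_{\eta(F+G)})(x^{\mathrm{out}})\|\le\varepsilon$, with total first-order oracle complexity $$\widetilde O\left(\frac{(1+\eta L)\|x_0-x^\star\|^2}{\varepsilon^2(\eta-\rho)^2(1-\eta L)}\right).$$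
   Context: For an operator $A$, $J_A=(\mathrm{Id}+A)^{-1}$. A first-order oracle call is one evaluation of $F$ and one resolvent of (a positive multiple of) $G$; $\widetilde O$ hides logarithmic factors. Subroutine FBF$(z_0,N,A,B_{\mathrm{in}},L_B)$: $\tau=\frac{1}{2L_B}$, $B(\cdot)=B_{\mathrm{in}}(\cdot)-z_0$; for $t=0,\dots,N-1$: $z_{t+1/2}=J_{\tau A}(z_t-\tau B(z_t))$, $z_{t+1}=z_{t+1/2}+\tau B(z_t)-\tau B(z_{t+1/2})$; output $z_N$. Inexact KM iteration: given $x_0$, $\alpha=1-\frac\rho\eta$; for $k\ge0$: $\widetilde J_{\eta(F+G)}(x_k)=\mathrm{FBF}(x_k,N_k,\eta G,\mathrm{Id}+\eta F,1+\eta L)$ with $N_k=\left\lceil\frac{4(1+\eta L)}{1-\eta L}\log(8(k+1)\log^2(k+2))\right\rceil$, and $x_{k+1}=(1-\alpha)x_k+\alpha\widetilde J_{\eta(F+G)}(x_k)$. *)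

theory Defs
  imports "HOL-Analysis.Analysis"
begin

definition graph_op :: "('a \<Rightarrow> 'a set) \<Rightarrow> ('a \<times> 'a) set" where
  "graph_op A = {(x, u). u \<in> A x}"

definition monotone_op :: "('a::real_inner \<Rightarrow> 'a set) \<Rightarrow> bool" where
  "monotone_op A \<longleftrightarrow>
     (\<forall>x y u v. u \<in> A x \<longrightarrow> v \<in> A y \<longrightarrow> inner (u - v) (x - y) \<ge> 0)"

definition maximal_monotone :: "('a::real_inner \<Rightarrow> 'a set) \<Rightarrow> bool" where
  "maximal_monotone A \<longleftrightarrow> monotone_op A \<and>
     (\<forall>B. monotone_op B \<longrightarrow> graph_op A \<subseteq> graph_op B \<longrightarrow> B = A)"

definition op_plus :: "('a::real_vector \<Rightarrow> 'a) \<Rightarrow> ('a \<Rightarrow> 'a set) \<Rightarrow> 'a \<Rightarrow> 'a set" where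
  "op_plus F G x = {F x + u | u. u \<in> G x}"

definition op_scale :: "real \<Rightarrow> ('a::real_vector \<Rightarrow> 'a set) \<Rightarrow> 'a \<Rightarrow> 'a set" where
  "op_scale c A x = (\<lambda>u. c *\<^sub>R u) ` A x"

text \<open>Resolvent J_A = (Id + A)^{-1}, as a set-valued map:
  J_A(x) = {z. x \<in> z + A z}.\<close>
definition resolvent :: "('a::real_vector \<Rightarrow> 'a set) \<Rightarrow> 'a \<Rightarrow> 'a set" where
  "resolvent A x = {z. x - z \<in> A z}"

text \<open>Point value of a resolvent (meaningful when the resolvent is single-valued,
  e.g. for maximally monotone A).\<close>
definition resolvent_pt :: "('a::real_vector \<Rightarrow> 'a set) \<Rightarrow> 'a \<Rightarrow> 'a" where
  "resolvent_pt A x = (THE z. z \<in> resolvent A x)"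

definition fbf_step ::
  "real \<Rightarrow> ('a::real_vector \<Rightarrow> 'a set) \<Rightarrow> ('a \<Rightarrow> 'a) \<Rightarrow> 'a \<Rightarrow> 'a" where
  "fbf_step \<tau> A B z =
     (let zh = resolvent_pt (op_scale \<tau> A) (z - \<tau> *\<^sub>R B z)
      in zh + \<tau> *\<^sub>R B z - \<tau> *\<^sub>R B zh)"

definition FBF ::
  "'a::real_vector \<Rightarrow> nat \<Rightarrow> ('a \<Rightarrow> 'a set) \<Rightarrow> ('a \<Rightarrow> 'a) \<Rightarrow> real \<Rightarrow> 'a" where
  "FBF z0 N A Bin LB =
     (let \<tau> = 1 / (2 * LB); B = (\<lambda>y. Bin y - z0)
      in (fbf_step \<tau> A B ^^ N) z0)"

definition inner_iters :: "real \<Rightarrow> real \<Rightarrow> nat \<Rightarrow> nat" where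
  "inner_iters \<eta> L k =
     nat \<lceil>4 * (1 + \<eta> * L) / (1 - \<eta> * L)
            * ln (8 * real (k + 1) * (ln (real (k + 2)))\<^sup>2)\<rceil>"

end

theory Submission
  imports Defs
begin

text \<open>
  For a weak Minty solution x* with parameter \<rho> and \<alpha> = 1 - \<rho>/\<eta>, the relaxed resolvent step
  x + \<alpha> (J x - x), J = J_{\<eta>(F+G)}, decreases |x - x*|^2 by at least \<alpha>^2 |x - J x|^2.
  J x is only approximated, by N_k steps of Tseng's forward-backward-forward method for the
  strongly monotone Lipschitz map Id + \<eta>F plus the maximally monotone \<eta>G; these converge
  linearly, so the inner error is at most \<delta>_k |x_k - J x_k| with \<Sum>\<delta>_k \<le> 1.  The errors inflate
  distances by at most \<Prod>(1 + \<delta>_k) \<le> e, so the squared residuals of the first K iterates sum to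
  at most e^2 |x_0 - x*|^2 / \<alpha>^2 and the smallest one is O(1/K).  All resolvents involved exist
  and are unique by Minty's theorem, proved here from the Debrunner-Flor finite extension lemma
  and compactness.
\<close>

section \<open>Minty's theorem in finite dimension\<close>

lemma inner_diff_diff_eq_norm_midpoint:
  fixes z a b :: "'a::real_inner"
  shows "inner (z - a) (z - b) = (norm (z - (a + b) /\<^sub>R 2))\<^sup>2 - (norm ((a - b) /\<^sub>R 2))\<^sup>2"
  by (simp add: power2_norm_eq_inner inner_diff_left inner_diff_right inner_add_left
      inner_add_right inner_commute algebra_simps)

lemma inner_diff_diff_nonpos_eq_cball:
  fixes a b :: "'a::real_inner"
  shows "{z. inner (z - a) (z - b) \<le> 0} = cball ((a + b) /\<^sub>R 2) (norm ((a - b) /\<^sub>R 2))"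
proof (rule set_eqI)
  fix z
  have "inner (z - a) (z - b) \<le> 0 \<longleftrightarrow>
      (norm (z - (a + b) /\<^sub>R 2))\<^sup>2 \<le> (norm ((a - b) /\<^sub>R 2))\<^sup>2"
    unfolding inner_diff_diff_eq_norm_midpoint by (rule diff_le_0_iff_le)
  also have "\<dots> \<longleftrightarrow> norm (z - (a + b) /\<^sub>R 2) \<le> norm ((a - b) /\<^sub>R 2)"
    by (rule power2_le_iff_abs_le[THEN trans]) simp_all
  finally show "z \<in> {z. inner (z - a) (z - b) \<le> 0} \<longleftrightarrow> z \<in> cball ((a + b) /\<^sub>R 2) (norm ((a - b) /\<^sub>R 2))"
    by (simp only: mem_Collect_eq mem_cball dist_norm norm_minus_commute)
qed

lemma monotone_pairs_inner_average_le:
  fixes P :: "('a::real_inner \<times> 'a) set"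
  assumes u_nonneg: "\<And>i. i \<in> P \<Longrightarrow> 0 \<le> u i" and u_sum: "sum u P = 1"
    and mono: "\<And>i j. i \<in> P \<Longrightarrow> j \<in> P \<Longrightarrow> 0 \<le> inner (snd i - snd j) (fst i - fst j)"
  shows "inner (\<Sum>i\<in>P. u i *\<^sub>R snd i) (\<Sum>i\<in>P. u i *\<^sub>R fst i)
          \<le> (\<Sum>i\<in>P. u i * inner (snd i) (fst i))"
proof -
  define S where "S = (\<Sum>i\<in>P. u i * inner (snd i) (fst i))"
  define W where "W = inner (\<Sum>i\<in>P. u i *\<^sub>R snd i) (\<Sum>i\<in>P. u i *\<^sub>R fst i)"
  have W1: "W = (\<Sum>i\<in>P. \<Sum>j\<in>P. u i * u j * inner (snd j) (fst i))"
    unfolding W_def by (simp add: inner_sum_left inner_sum_right sum_distrib_left mult.assoc)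
  have W2: "W = (\<Sum>i\<in>P. \<Sum>j\<in>P. u i * u j * inner (snd i) (fst j))"
    unfolding W1 by (subst sum.swap) (simp add: mult.commute)
  have S1: "S = (\<Sum>i\<in>P. \<Sum>j\<in>P. u i * u j * inner (snd i) (fst i))"
    unfolding S_def
    by (simp add: sum_distrib_right[symmetric] mult.commute[of "u _" "u _"]
        mult.assoc[symmetric] flip: sum_distrib_left)
      (simp add: sum_distrib_left[symmetric] u_sum mult.assoc)
  have S2: "S = (\<Sum>i\<in>P. \<Sum>j\<in>P. u i * u j * inner (snd j) (fst j))"
    unfolding S_def by (subst sum.swap) (simp add: u_sum flip: sum_distrib_right)
  have "0 \<le> (\<Sum>i\<in>P. \<Sum>j\<in>P. u i * u j * inner (snd i - snd j) (fst i - fst j))"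
    using u_nonneg mono by (intro sum_nonneg) auto
  also have "\<dots> = (\<Sum>i\<in>P. \<Sum>j\<in>P. u i * u j * inner (snd i) (fst i))
      + (\<Sum>i\<in>P. \<Sum>j\<in>P. u i * u j * inner (snd j) (fst j))
      - (\<Sum>i\<in>P. \<Sum>j\<in>P. u i * u j * inner (snd i) (fst j))
      - (\<Sum>i\<in>P. \<Sum>j\<in>P. u i * u j * inner (snd j) (fst i))"
    by (simp add: inner_diff_left inner_diff_right algebra_simps sum_subtractf sum.distrib)
  finally show ?thesis using S1 S2 W1 W2 unfolding S_def W_def by linarith
qed

lemma weighted_extension_gap_nonpos:
  fixes A :: "('a::real_inner \<times> 'a) set"
  assumes u: "\<And>i. i \<in> A \<Longrightarrow> 0 \<le> u i" "sum u A = 1"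
    and mono: "\<And>i j. i \<in> A \<Longrightarrow> j \<in> A \<Longrightarrow> 0 \<le> inner (snd i - snd j) (fst i - fst j)"
    and balance: "2 *\<^sub>R z - p + (\<Sum>i\<in>A. u i *\<^sub>R (snd i - fst i)) = 0"
  shows "(\<Sum>i\<in>A. u i * inner (z - (p - snd i)) (z - fst i)) \<le> 0"
proof -
  define Y where "Y = (\<Sum>i\<in>A. u i *\<^sub>R fst i)"
  define W where "W = (\<Sum>i\<in>A. u i *\<^sub>R snd i)"
  have "z - p + W = Y - z"
    using balance by (simp add: Y_def W_def scaleR_diff_right sum_subtractf algebra_simps scaleR_2)
  have "(\<Sum>i\<in>A. u i * inner (z - (p - snd i)) (z - fst i))
      = inner (z - p) (z - Y) + inner W z - (\<Sum>i\<in>A. u i * inner (snd i) (fst i))"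
    by (simp add: Y_def W_def inner_diff_left inner_diff_right inner_add_left algebra_simps
        sum.distrib sum_subtractf inner_sum_left inner_sum_right u(2)
        flip: sum_distrib_left sum_distrib_right)
  also have "\<dots> \<le> inner (z - p) (z - Y) + inner W z - inner W Y"
    using monotone_pairs_inner_average_le[OF u mono] unfolding W_def Y_def by simp
  also have "\<dots> = inner (z - p + W) (z - Y)"
    by (simp add: inner_diff_left inner_diff_right inner_add_left algebra_simps)
  also have "\<dots> = - (norm (z - Y))\<^sup>2"
    by (simp add: \<open>z - p + W = Y - z\<close> power2_norm_eq_inner flip: inner_minus_left)
  finally show ?thesis by (smt (verit) zero_le_power2)
qed

lemma continuous_on_Max_image:
  fixes f :: "'i \<Rightarrow> 'a::topological_space \<Rightarrow> real"
  assumes "finite P" "P \<noteq> {}" "\<And>i. continuous_on UNIV (f i)"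
  shows "continuous_on UNIV (\<lambda>z. Max ((\<lambda>i. f i z) ` P))"
  using assms(1,2)
proof (induction P rule: finite_ne_induct)
  case (singleton i)
  then show ?case using assms(3) by simp
next
  case (insert i P)
  then show ?case using assms(3) by (simp add: continuous_on_max)
qed

lemma continuous_coercive_attains_min:
  fixes \<psi> :: "'a::euclidean_space \<Rightarrow> real"
  assumes cont: "continuous_on UNIV \<psi>" and coercive: "\<And>z. (norm (z - c))\<^sup>2 - r \<le> \<psi> z"
  obtains z0 where "\<And>z. \<psi> z0 \<le> \<psi> z"
proof -
  define R where "R = \<bar>\<psi> c\<bar> + \<bar>r\<bar> + 1"
  have "R \<ge> 1" by (simp add: R_def)
  then obtain z0 where z0: "\<And>y. y \<in> cball c R \<Longrightarrow> \<psi> z0 \<le> \<psi> y"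
    using continuous_attains_inf[OF compact_cball, of c R \<psi>]
      continuous_on_subset[OF cont subset_UNIV] by fastforce
  have "\<psi> z0 \<le> \<psi> z" for z
  proof (cases "z \<in> cball c R")
    case False
    then have "R < norm (z - c)" by (simp add: dist_norm norm_minus_commute)
    then have "R * R < (norm (z - c))\<^sup>2"
      unfolding power2_eq_square R_def by (intro mult_strict_mono) auto
    moreover have "R \<le> R * R" using \<open>R \<ge> 1\<close> by (simp add: mult_le_cancel_left1)
    moreover have "\<psi> c + r \<le> R" unfolding R_def by linarith
    moreover have "\<psi> z0 \<le> \<psi> c" using z0[of c] \<open>R \<ge> 1\<close> by simp
    ultimately show ?thesis using coercive[of z] by linarith
  qed (use z0 in blast)
  then show ?thesis using that by blast
qed

lemma zero_in_active_hull_at_Max_minimizer: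
  fixes f :: "'i \<Rightarrow> 'a::euclidean_space \<Rightarrow> real" and g :: "'i \<Rightarrow> 'a"
  assumes fin: "finite P" and ne: "P \<noteq> {}"
    and expand: "\<And>i t a. i \<in> P \<Longrightarrow> f i (z - t *\<^sub>R a) = f i z - t * inner a (g i) + t\<^sup>2 * inner a a"
    and min: "\<And>w. Max ((\<lambda>i. f i z) ` P) \<le> Max ((\<lambda>i. f i w) ` P)"
  shows "0 \<in> convex hull (g ` {i\<in>P. f i z = Max ((\<lambda>i. f i z) ` P)})"
proof (rule ccontr)
  define m where "m = Max ((\<lambda>i. f i z) ` P)"
  define A where "A = {i\<in>P. f i z = m}"
  assume "0 \<notin> convex hull (g ` {i\<in>P. f i z = Max ((\<lambda>i. f i z) ` P)})"
  then have "0 \<notin> convex hull (g ` A)" by (simp add: A_def m_def)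
  moreover have "compact (convex hull (g ` A))"
    using fin by (intro finite_imp_compact_convex_hull) (simp add: A_def)
  ultimately obtain a b where "a \<noteq> 0" "0 < b" and ab: "\<And>i. i \<in> A \<Longrightarrow> b < inner a (g i)"
    using separating_hyperplane_closed_0[OF convex_convex_hull compact_imp_closed]
    by (metis hull_inc image_eqI)
  then have aa: "0 < inner a a" by simp
  have fle: "f i z \<le> m" if "i \<in> P" for i using fin that by (simp add: m_def)
  have "\<forall>\<^sub>F t in at_right (0::real). \<forall>i\<in>P. f i (z - t *\<^sub>R a) < m"
  proof (rule eventually_ball_finite[OF fin], rule ballI)
    fix i assume iP: "i \<in> P"
    show "\<forall>\<^sub>F t in at_right 0. f i (z - t *\<^sub>R a) < m"
    proof (cases "i \<in> A")
      case True
      have "\<forall>\<^sub>F t in at_right (0::real). 0 < t \<and> t < b / inner a a"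
        using \<open>0 < b\<close> aa by (intro eventually_conj eventually_at_right_less)
          (auto intro: order_tendstoD(2)[OF tendsto_ident_at])
      then show ?thesis
      proof (rule eventually_mono)
        fix t :: real assume t: "0 < t \<and> t < b / inner a a"
        then have "t\<^sup>2 * inner a a < t * b"
          using aa by (simp add: power2_eq_square pos_less_divide_eq mult.assoc)
        moreover have "t * b < t * inner a (g i)" using t ab[OF True] by simp
        ultimately show "f i (z - t *\<^sub>R a) < m"
          using True expand[OF iP] by (simp add: A_def)
      qed
    next
      case False
      then have "f i z < m" using fle[OF iP] iP by (auto simp: A_def)
      moreover have "((\<lambda>t. f i z - t * inner a (g i) + t\<^sup>2 * inner a a) \<longlongrightarrow> f i z) (at_right 0)"
        by (auto intro!: tendsto_eq_intros)
      ultimately show ?thesis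
        using order_tendstoD(2) by (simp add: expand[OF iP])
    qed
  qed
  then obtain t where "\<forall>i\<in>P. f i (z - t *\<^sub>R a) < m"
    using eventually_happens[of _ "at_right (0::real)"] by auto
  then have "Max ((\<lambda>i. f i (z - t *\<^sub>R a)) ` P) < m" using fin ne by simp
  then show False using min[of "z - t *\<^sub>R a"] by (simp add: m_def)
qed

text \<open>Debrunner-Flor: minimise the maximum of the functions f_i below.  At a minimiser the
  gradients of the active f_i have a convex combination equal to 0, and averaging the monotone pairs
  with these weights shows that the maximum is \<le> 0.\<close>

lemma monotone_finite_extension:
  fixes P :: "('a::euclidean_space \<times> 'a) set"
  assumes fin: "finite P"
    and mono: "\<And>i j. i \<in> P \<Longrightarrow> j \<in> P \<Longrightarrow> 0 \<le> inner (snd i - snd j) (fst i - fst j)"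
  shows "\<exists>z. \<forall>i\<in>P. inner (z - (p - snd i)) (z - fst i) \<le> 0"
proof (cases "P = {}")
  case False
  define f where "f i z = inner (z - (p - snd i)) (z - fst i)" for i z
  have "continuous_on UNIV (\<lambda>z. Max ((\<lambda>i. f i z) ` P))"
    using fin False by (intro continuous_on_Max_image) (auto simp: f_def intro!: continuous_intros)
  moreover obtain i0 where "i0 \<in> P" using False by blast
  then have "(norm (z - ((p - snd i0) + fst i0) /\<^sub>R 2))\<^sup>2 - (norm (((p - snd i0) - fst i0) /\<^sub>R 2))\<^sup>2
      \<le> Max ((\<lambda>i. f i z) ` P)" for z
    using fin unfolding inner_diff_diff_eq_norm_midpoint[symmetric] f_def by simp
  ultimately obtain z0 where min: "\<And>w. Max ((\<lambda>i. f i z0) ` P) \<le> Max ((\<lambda>i. f i w) ` P)"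
    using continuous_coercive_attains_min by blast
  define m where "m = Max ((\<lambda>i. f i z0) ` P)"
  define A where "A = {i\<in>P. f i z0 = m}"
  have fle: "f i z0 \<le> m" if "i \<in> P" for i using fin that by (simp add: m_def)
  define grad where "grad i = (2 *\<^sub>R z0 - p) + (snd i - fst i)" for i :: "'a \<times> 'a"
  have "0 \<in> convex hull (grad ` A)"
    unfolding A_def m_def
  proof (rule zero_in_active_hull_at_Max_minimizer[of P f z0 grad])
    show "finite P" "P \<noteq> {}" by (fact fin, fact False)
    show "Max ((\<lambda>i. f i z0) ` P) \<le> Max ((\<lambda>i. f i w) ` P)" for w by (rule min)
    show "f i (z0 - t *\<^sub>R a) = f i z0 - t * inner a (grad i) + t\<^sup>2 * inner a a" for i t a
      by (simp add: f_def grad_def inner_diff_left inner_diff_right inner_add_left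
          inner_add_right inner_commute algebra_simps power2_eq_square)
  qed
  moreover have "grad ` (convex hull A) = convex hull (grad ` A)"
  proof -
    have "linear (\<lambda>i :: 'a \<times> 'a. snd i - fst i)"
      by (intro linearI) (auto simp: algebra_simps)
    then show ?thesis
      unfolding grad_def image_image[of "(+) (2 *\<^sub>R z0 - p)" "\<lambda>i. snd i - fst i", symmetric, simplified]
      by (simp add: convex_hull_translation convex_hull_linear_image)
  qed
  ultimately obtain q where "q \<in> convex hull A" "grad q = 0" by (metis imageE)
  moreover have finA: "finite A" using fin by (simp add: A_def)
  ultimately obtain u where u: "\<And>i. i \<in> A \<Longrightarrow> 0 \<le> u i" "sum u A = 1" "(\<Sum>i\<in>A. u i *\<^sub>R i) = q"
    by (auto simp: convex_hull_finite)
  have "grad q = 2 *\<^sub>R z0 - p + (\<Sum>i\<in>A. u i *\<^sub>R (snd i - fst i))"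
    unfolding u(3)[symmetric] grad_def by (simp add: fst_sum snd_sum scaleR_diff_right sum_subtractf)
  then have "(\<Sum>i\<in>A. u i * f i z0) \<le> 0"
    unfolding f_def using \<open>grad q = 0\<close> mono
    by (intro weighted_extension_gap_nonpos[OF u(1,2)]) (auto simp: A_def)
  moreover have "(\<Sum>i\<in>A. u i * f i z0) = m"
    using u(2) by (simp add: A_def flip: sum_distrib_right)
  ultimately show ?thesis using fle unfolding f_def by (meson order_trans)
qed simp

lemma maximal_monotone_memI:
  assumes max: "maximal_monotone A"
    and mono_wrt: "\<And>y v. v \<in> A y \<Longrightarrow> 0 \<le> inner (u - v) (z - y)"
  shows "u \<in> A z"
proof -
  define B where "B w = (if w = z then insert u (A w) else A w)" for w
  have monoA: "monotone_op A" using max by (simp add: maximal_monotone_def)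
  have "monotone_op B"
    unfolding monotone_op_def
  proof (intro allI impI)
    fix x y u' v assume "u' \<in> B x" "v \<in> B y"
    then consider "u' \<in> A x" "v \<in> A y" | "x = z" "u' = u" "v \<in> A y"
      | "u' \<in> A x" "y = z" "v = u" | "u' = v" "x = y"
      by (auto simp: B_def split: if_splits)
    then show "0 \<le> inner (u' - v) (x - y)"
    proof cases
      case 1 then show ?thesis using monoA by (auto simp: monotone_op_def)
    next
      case 2 then show ?thesis using mono_wrt by blast
    next
      case 3 then show ?thesis using mono_wrt[of u' x]
        by (metis inner_minus_left inner_minus_right minus_diff_eq)
    qed simp
  qed
  moreover have "graph_op A \<subseteq> graph_op B" by (auto simp: graph_op_def B_def)
  ultimately have "B = A" using max unfolding maximal_monotone_def by blast
  then show ?thesis by (metis B_def insertI1)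
qed

text \<open>Minty's theorem.  The constraints of the extension problem are closed balls, so compactness
  reduces it to finitely many points of the graph; maximality then puts p - z into A z.\<close>

theorem maximal_monotone_resolvent_nonempty:
  fixes A :: "'a::euclidean_space \<Rightarrow> 'a set"
  assumes max: "maximal_monotone A"
  shows "resolvent A p \<noteq> {}"
proof -
  define ball_of where "ball_of i = {z. inner (z - (p - snd i)) (z - fst i) \<le> 0}" for i :: "'a \<times> 'a"
  have "compact (ball_of i)" for i
    unfolding ball_of_def inner_diff_diff_nonpos_eq_cball by (rule compact_cball)
  have "\<Inter>(ball_of ` graph_op A) \<noteq> {}"
  proof (rule compact_fip_Heine_Borel)
    show "compact T" if "T \<in> ball_of ` graph_op A" for T
      using that \<open>\<And>i. compact (ball_of i)\<close> by blast
  next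
    fix \<F> assume "finite \<F>" "\<F> \<subseteq> ball_of ` graph_op A"
    then obtain P where P: "P \<subseteq> graph_op A" "finite P" "\<F> = ball_of ` P"
      by (metis finite_subset_image)
    have "0 \<le> inner (snd i - snd j) (fst i - fst j)" if "i \<in> P" "j \<in> P" for i j
    proof -
      have "snd i \<in> A (fst i)" "snd j \<in> A (fst j)" using P(1) that by (auto simp: graph_op_def)
      then show ?thesis using max unfolding maximal_monotone_def monotone_op_def by blast
    qed
    then obtain z where "\<forall>i\<in>P. inner (z - (p - snd i)) (z - fst i) \<le> 0"
      using monotone_finite_extension[OF P(2)] by blast
    then have "z \<in> \<Inter>\<F>" unfolding P(3) ball_of_def by blast
    then show "\<Inter>\<F> \<noteq> {}" by blast
  qed
  then obtain z where z_in: "\<And>i. i \<in> graph_op A \<Longrightarrow> z \<in> ball_of i" by blast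
  have z: "inner (z - (p - v)) (z - y) \<le> 0" if "v \<in> A y" for y v
    using z_in[of "(y, v)"] that by (simp add: ball_of_def graph_op_def)
  have "p - z \<in> A z"
  proof (rule maximal_monotone_memI[OF max])
    fix y v assume "v \<in> A y"
    moreover have "p - z - v = - (z - (p - v))" by simp
    ultimately show "0 \<le> inner (p - z - v) (z - y)"
      using z by (simp only: inner_minus_left) (simp add: \<open>v \<in> A y\<close>)
  qed
  then show ?thesis by (auto simp: resolvent_def)
qed

section \<open>Resolvents\<close>

lemma resolvent_nonexpansive:
  assumes mono: "monotone_op A" and "z \<in> resolvent A p" "z' \<in> resolvent A q"
  shows "norm (z - z') \<le> norm (p - q)"
proof -
  have "0 \<le> inner ((p - z) - (q - z')) (z - z')"
    using mono assms(2,3) by (auto simp: monotone_op_def resolvent_def)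
  then have "(norm (z - z'))\<^sup>2 \<le> inner (p - q) (z - z')"
    by (simp add: power2_norm_eq_inner inner_diff_left algebra_simps)
  also have "\<dots> \<le> norm (p - q) * norm (z - z')" by (rule norm_cauchy_schwarz)
  finally have "norm (z - z') * norm (z - z') \<le> norm (p - q) * norm (z - z')"
    by (simp add: power2_eq_square)
  then show ?thesis by (cases "z = z'") (simp_all add: mult_le_cancel_right)
qed

lemma resolvent_pt_mem:
  fixes A :: "'a::euclidean_space \<Rightarrow> 'a set"
  assumes max: "maximal_monotone A"
  shows "resolvent_pt A p \<in> resolvent A p"
proof -
  obtain z where z: "z \<in> resolvent A p" using maximal_monotone_resolvent_nonempty[OF max] by blast
  moreover have "z' = z" if "z' \<in> resolvent A p" for z'
    using resolvent_nonexpansive[OF _ that z] max by (simp add: maximal_monotone_def)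
  ultimately show ?thesis unfolding resolvent_pt_def by (rule theI)
qed

lemma op_scale_op_scale: "op_scale a (op_scale b A) = op_scale (a * b) A"
  by (auto simp: op_scale_def image_image fun_eq_iff)

lemma op_scale_one: "op_scale 1 A = A"
  by (simp add: op_scale_def fun_eq_iff)

lemma resolvent_op_scale_iff: "z \<in> resolvent (op_scale c A) p \<longleftrightarrow> (\<exists>u\<in>A z. p - z = c *\<^sub>R u)"
  by (auto simp: resolvent_def op_scale_def image_iff)

lemma op_scale_op_plus: "op_scale c (op_plus F G) = op_plus (\<lambda>x. c *\<^sub>R F x) (op_scale c G)"
  unfolding op_scale_def op_plus_def by (auto simp: fun_eq_iff image_def scaleR_add_right)

lemma monotone_op_scale:
  assumes "monotone_op A" "0 \<le> c"
  shows "monotone_op (op_scale c A)"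
  using assms by (auto simp: monotone_op_def op_scale_def simp flip: scaleR_diff_right)

lemma maximal_monotone_op_scale:
  assumes max: "maximal_monotone A" and c: "0 < c"
  shows "maximal_monotone (op_scale c A)"
  unfolding maximal_monotone_def
proof (intro conjI allI impI)
  show "monotone_op (op_scale c A)"
    using max c by (simp add: maximal_monotone_def monotone_op_scale)
next
  fix B assume "monotone_op B" and sub: "graph_op (op_scale c A) \<subseteq> graph_op B"
  then have "monotone_op (op_scale (1 / c) B)" using c by (simp add: monotone_op_scale)
  moreover have "graph_op A \<subseteq> graph_op (op_scale (1 / c) B)"
  proof
    fix yv assume "yv \<in> graph_op A"
    then have "(fst yv, c *\<^sub>R snd yv) \<in> graph_op (op_scale c A)"
      by (auto simp: graph_op_def op_scale_def)
    then have "(fst yv, c *\<^sub>R snd yv) \<in> graph_op B" using sub by blast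
    then show "yv \<in> graph_op (op_scale (1 / c) B)"
      using c by (force simp: graph_op_def op_scale_def image_iff)
  qed
  ultimately have "op_scale (1 / c) B = A" using max unfolding maximal_monotone_def by blast
  moreover have "op_scale c (op_scale (1 / c) B) = B"
    using c by (simp add: op_scale_op_scale op_scale_one)
  ultimately show "B = op_scale c A" by simp
qed

lemma resolvent_op_plus_iff: "z \<in> resolvent (op_plus B A) x \<longleftrightarrow> x - z - B z \<in> A z"
proof -
  have "x - z = B z + u \<longleftrightarrow> u = x - z - B z" for u by (auto simp: algebra_simps)
  then show ?thesis by (auto simp: resolvent_def op_plus_def)
qed

lemma strongly_monotone_id_plus_lipschitz:
  fixes B :: "'a::real_inner \<Rightarrow> 'a"
  assumes "L-lipschitz_on UNIV B"
  shows "(1 - L) * (norm (a - b))\<^sup>2 \<le> inner ((a + B a) - (b + B b)) (a - b)"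
proof -
  have "inner (B b - B a) (a - b) \<le> norm (B a - B b) * norm (a - b)"
    using norm_cauchy_schwarz[of "B b - B a" "a - b"] by (simp add: norm_minus_commute)
  also have "\<dots> \<le> L * norm (a - b) * norm (a - b)"
    using lipschitz_onD[OF assms, of a b] by (intro mult_right_mono) (simp_all add: dist_norm)
  finally have "inner (B b - B a) (a - b) \<le> L * (norm (a - b))\<^sup>2"
    by (simp add: power2_eq_square)
  moreover have "inner ((a + B a) - (b + B b)) (a - b) = (norm (a - b))\<^sup>2 - inner (B b - B a) (a - b)"
    by (simp add: power2_norm_eq_inner inner_diff_left inner_add_left algebra_simps)
  ultimately show ?thesis by (simp add: algebra_simps)
qed

lemma resolvent_op_plus_unique:
  fixes B :: "'a::real_inner \<Rightarrow> 'a"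
  assumes mono: "monotone_op A" and lip: "L-lipschitz_on UNIV B" and "L < 1"
    and z: "z \<in> resolvent (op_plus B A) x" and z': "z' \<in> resolvent (op_plus B A) x"
  shows "z = z'"
proof -
  have "0 \<le> inner ((x - z - B z) - (x - z' - B z')) (z - z')"
    using mono z z' unfolding resolvent_op_plus_iff monotone_op_def by blast
  then have "inner ((z + B z) - (z' + B z')) (z - z') \<le> 0"
    by (simp add: inner_diff_left inner_add_left algebra_simps)
  with strongly_monotone_id_plus_lipschitz[OF lip, of z z'] \<open>L < 1\<close>
  have "(norm (z - z'))\<^sup>2 \<le> 0"
    by (smt (verit) mult_pos_pos zero_less_power2)
  then show ?thesis by simp
qed

lemma resolvent_op_plus_nonempty:
  fixes B :: "'a::euclidean_space \<Rightarrow> 'a"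
  assumes max: "maximal_monotone A" and lip: "L-lipschitz_on UNIV B" and "L < 1"
  shows "resolvent (op_plus B A) x \<noteq> {}"
proof -
  define f where "f z = resolvent_pt A (x - B z)" for z
  have mono: "monotone_op A" using max by (simp add: maximal_monotone_def)
  have "dist (f z) (f z') \<le> L * dist z z'" for z z'
  proof -
    have "dist (f z) (f z') \<le> norm ((x - B z) - (x - B z'))"
      unfolding f_def dist_norm
      by (rule resolvent_nonexpansive[OF mono resolvent_pt_mem[OF max] resolvent_pt_mem[OF max]])
    also have "\<dots> = dist (B z) (B z')" by (simp add: dist_norm norm_minus_commute)
    also have "\<dots> \<le> L * dist z z'" using lipschitz_onD[OF lip] by simp
    finally show ?thesis .
  qed
  then obtain z where "f z = z"
    using banach_fix_type[of L f] lipschitz_on_nonneg[OF lip] \<open>L < 1\<close> by blast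
  then have "z \<in> resolvent A (x - B z)" using resolvent_pt_mem[OF max] by (metis f_def)
  then have "x - z - B z \<in> A z" unfolding resolvent_def by (simp add: diff_diff_eq add.commute)
  then show ?thesis by (auto simp flip: resolvent_op_plus_iff)
qed

lemma resolvent_op_scale_op_plus_eq:
  fixes F :: "'a::euclidean_space \<Rightarrow> 'a"
  assumes lip: "L-lipschitz_on UNIV F" and max: "maximal_monotone G" and "0 < \<eta>" "\<eta> * L < 1"
  shows "resolvent (op_scale \<eta> (op_plus F G)) x = {resolvent_pt (op_scale \<eta> (op_plus F G)) x}"
proof -
  have lip\<eta>: "(\<eta> * L)-lipschitz_on UNIV (\<lambda>y. \<eta> *\<^sub>R F y)"
    using lipschitz_on_cmult_nonneg[OF lip] \<open>0 < \<eta>\<close> by simp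
  have mono: "monotone_op (op_scale \<eta> G)"
    using max \<open>0 < \<eta>\<close> by (simp add: maximal_monotone_def monotone_op_scale)
  obtain z where z: "z \<in> resolvent (op_scale \<eta> (op_plus F G)) x"
    using resolvent_op_plus_nonempty[OF maximal_monotone_op_scale[OF max \<open>0 < \<eta>\<close>] lip\<eta> \<open>\<eta> * L < 1\<close>]
    unfolding op_scale_op_plus by blast
  moreover have "z' = z" if "z' \<in> resolvent (op_scale \<eta> (op_plus F G)) x" for z'
    using resolvent_op_plus_unique[OF mono lip\<eta> \<open>\<eta> * L < 1\<close>] that z unfolding op_scale_op_plus by blast
  ultimately have "resolvent (op_scale \<eta> (op_plus F G)) x = {z}" by blast
  then show ?thesis by (simp add: resolvent_pt_def)
qed

section \<open>The forward-backward-forward inner solver\<close>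

lemma fbf_key_inequality:
  fixes a b g h :: "'a::real_inner"
  assumes mono: "inner g b + inner h b \<le> inner a b"
    and g: "norm g \<le> norm a / 2" and h: "\<kappa> / 2 * (norm b)\<^sup>2 \<le> inner h b" and "0 \<le> \<kappa>"
  shows "(3 + 4 * \<kappa>) * (norm (b + g))\<^sup>2 \<le> (3 + \<kappa>) * (norm (a + b))\<^sup>2"
proof -
  have "(norm g)\<^sup>2 \<le> (norm a / 2)\<^sup>2" using g by (simp add: power_mono)
  moreover have "(norm (b + g))\<^sup>2 = (norm b)\<^sup>2 + 2 * inner b g + (norm g)\<^sup>2"
    "(norm (a + b))\<^sup>2 = (norm a)\<^sup>2 + 2 * inner a b + (norm b)\<^sup>2"
    by (simp_all add: power2_norm_eq_inner inner_add_left inner_add_right inner_commute)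
  ultimately have descent: "(norm (b + g))\<^sup>2 \<le> (norm (a + b))\<^sup>2 - (3/4 * (norm a)\<^sup>2 + \<kappa> * (norm b)\<^sup>2)"
    using mono h by (simp add: inner_commute power_divide)
  define Q where "Q = 3/4 * (norm a)\<^sup>2 + \<kappa> * (norm b)\<^sup>2"
  have tri: "(norm (a + b))\<^sup>2 \<le> (norm a + norm b)\<^sup>2"
    using norm_triangle_ineq[of a b] by (simp add: power_mono)
  have "(3 + 4 * \<kappa>) * Q - 3 * \<kappa> * (norm a + norm b)\<^sup>2 = (3/2 * norm a - 2 * \<kappa> * norm b)\<^sup>2"
    by (simp add: Q_def power2_eq_square field_simps)
  then have amgm: "3 * \<kappa> * (norm a + norm b)\<^sup>2 \<le> (3 + 4 * \<kappa>) * Q"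
    using zero_le_power2[of "3/2 * norm a - 2 * \<kappa> * norm b"] by linarith
  have "(3 + 4 * \<kappa>) * (norm (b + g))\<^sup>2 \<le> (3 + 4 * \<kappa>) * ((norm (a + b))\<^sup>2 - Q)"
    using descent \<open>0 \<le> \<kappa>\<close> unfolding Q_def by (intro mult_left_mono) simp_all
  also have "\<dots> \<le> (3 + 4 * \<kappa>) * (norm (a + b))\<^sup>2 - 3 * \<kappa> * (norm (a + b))\<^sup>2"
    using amgm mult_left_mono[OF tri, of "3 * \<kappa>"] \<open>0 \<le> \<kappa>\<close> by (simp add: right_diff_distrib)
  finally show ?thesis by (simp add: algebra_simps)
qed

lemma fbf_step_contraction:
  fixes A :: "'a::euclidean_space \<Rightarrow> 'a set"
  assumes max: "maximal_monotone A" and lip: "L-lipschitz_on UNIV B"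
    and strong: "\<And>a b. \<mu> * (norm (a - b))\<^sup>2 \<le> inner (B a - B b) (a - b)"
    and "0 \<le> \<mu>" "0 < \<tau>" "\<tau> * L \<le> 1/2" and zero: "- B p \<in> A p"
  shows "(3 + 8 * \<tau> * \<mu>) * (norm (fbf_step \<tau> A B z - p))\<^sup>2 \<le> (3 + 2 * \<tau> * \<mu>) * (norm (z - p))\<^sup>2"
proof -
  define zh where "zh = resolvent_pt (op_scale \<tau> A) (z - \<tau> *\<^sub>R B z)"
  obtain u where u: "u \<in> A zh" "z - \<tau> *\<^sub>R B z - zh = \<tau> *\<^sub>R u"
    using resolvent_pt_mem[OF maximal_monotone_op_scale[OF max \<open>0 < \<tau>\<close>], of "z - \<tau> *\<^sub>R B z"]
    unfolding resolvent_op_scale_iff zh_def by blast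
  define a where "a = z - zh"
  define b where "b = zh - p"
  define g where "g = \<tau> *\<^sub>R (B z - B zh)"
  define h where "h = \<tau> *\<^sub>R (B zh - B p)"
  have "\<tau> *\<^sub>R (u - - B p) = a - g - h"
    by (simp add: a_def g_def h_def algebra_simps flip: u(2))
  then have eq: "\<tau> * inner (u - - B p) (zh - p) = inner (a - g - h) b"
    by (simp add: b_def flip: inner_scaleR_left)
  have "0 \<le> inner (u - - B p) (zh - p)"
    using max u(1) zero unfolding maximal_monotone_def monotone_op_def by blast
  then have "0 \<le> \<tau> * inner (u - - B p) (zh - p)" using \<open>0 < \<tau>\<close> by simp
  with eq have mono: "inner g b + inner h b \<le> inner a b" by (simp add: inner_diff_left)
  have "norm g \<le> \<tau> * (L * norm a)"
    using lipschitz_onD[OF lip, of z zh] \<open>0 < \<tau>\<close> by (simp add: g_def a_def dist_norm mult_left_mono)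
  then have g: "norm g \<le> norm a / 2"
    using \<open>\<tau> * L \<le> 1/2\<close> mult_right_mono[of "\<tau> * L" "1/2" "norm a"] by (simp add: mult.assoc)
  have h: "2 * \<tau> * \<mu> / 2 * (norm b)\<^sup>2 \<le> inner h b"
    using mult_left_mono[OF strong[of zh p], of \<tau>] \<open>0 < \<tau>\<close> by (simp add: h_def b_def mult.assoc)
  have "fbf_step \<tau> A B z - p = b + g" "z - p = a + b"
    by (simp_all add: fbf_step_def Let_def zh_def[symmetric] a_def b_def g_def algebra_simps)
  then show ?thesis
    using fbf_key_inequality[OF mono g h] \<open>0 \<le> \<mu>\<close> \<open>0 < \<tau>\<close> by (simp add: mult.assoc)
qed

lemma fbf_rate_le_exp:
  fixes k :: real
  assumes "0 \<le> k" "k \<le> 1"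
  shows "(3 + k) / (3 + 4 * k) \<le> exp (- k / 2)"
proof -
  have "(3 + k) * (1 + k/2 + (k/2)\<^sup>2) \<le> 3 + 4 * k"
  proof -
    have "k * k \<le> k" using assms by (intro mult_left_le)
    moreover have "k * k * k \<le> k * k" using assms by (intro mult_left_le) simp_all
    ultimately show ?thesis by (simp add: power2_eq_square field_simps)
  qed
  moreover have "exp (k/2) \<le> 1 + k/2 + (k/2)\<^sup>2" using assms by (intro exp_bound) auto
  ultimately have "(3 + k) * exp (k/2) \<le> 3 + 4 * k"
    using assms by (smt (verit) mult_left_mono)
  then show ?thesis using assms by (simp add: exp_minus field_simps)
qed

lemma norm_funpow_le:
  assumes step: "\<And>z. norm (T z - p) \<le> c * norm (z - p)" and "0 \<le> c"
  shows "norm ((T ^^ n) z - p) \<le> c ^ n * norm (z - p)"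
proof (induction n)
  case (Suc n)
  have "norm ((T ^^ Suc n) z - p) \<le> c * norm ((T ^^ n) z - p)" using step by simp
  also have "\<dots> \<le> c * (c ^ n * norm (z - p))" using Suc \<open>0 \<le> c\<close> by (rule mult_left_mono)
  finally show ?case by (simp add: mult.assoc)
qed simp

lemma FBF_linear_convergence:
  fixes A :: "'a::euclidean_space \<Rightarrow> 'a set"
  assumes max: "maximal_monotone A" and lip: "L-lipschitz_on UNIV B"
    and strong: "\<And>a b. \<mu> * (norm (a - b))\<^sup>2 \<le> inner (B a - B b) (a - b)"
    and "0 < \<mu>" "\<mu> \<le> L" and zero: "z0 - B p \<in> A p"
    and N: "4 * L / \<mu> * l \<le> real N"
  shows "norm (FBF z0 N A B L - p) \<le> exp (- l) * norm (z0 - p)"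
proof -
  define \<kappa> where "\<kappa> = \<mu> / L"
  have "0 < L" using \<open>0 < \<mu>\<close> \<open>\<mu> \<le> L\<close> by linarith
  have \<kappa>: "0 < \<kappa>" "\<kappa> \<le> 1" using \<open>0 < \<mu>\<close> \<open>\<mu> \<le> L\<close> by (simp_all add: \<kappa>_def)
  define T where "T = fbf_step (1 / (2 * L)) A (\<lambda>y. B y - z0)"
  have "norm (T z - p) \<le> exp (- \<kappa> / 4) * norm (z - p)" for z
  proof -
    have "(3 + 4 * \<kappa>) * (norm (T z - p))\<^sup>2 \<le> (3 + \<kappa>) * (norm (z - p))\<^sup>2"
      using fbf_step_contraction[OF max _ _ _ _ _ _, of L "\<lambda>y. B y - z0" \<mu> "1 / (2 * L)" p z]
        lipschitz_on_diff[OF lip lipschitz_on_constant, of z0] strong zero \<open>0 < \<mu>\<close> \<open>0 < L\<close>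
      by (simp add: T_def \<kappa>_def)
    then have "(norm (T z - p))\<^sup>2 \<le> (3 + \<kappa>) / (3 + 4 * \<kappa>) * (norm (z - p))\<^sup>2"
      using \<kappa> by (simp add: field_simps)
    also have "\<dots> \<le> exp (- \<kappa> / 2) * (norm (z - p))\<^sup>2"
      using fbf_rate_le_exp[of \<kappa>] \<kappa> by (intro mult_right_mono) simp_all
    also have "\<dots> = (exp (- \<kappa> / 4) * norm (z - p))\<^sup>2"
      by (simp add: power_mult_distrib flip: exp_of_nat_mult)
    finally show ?thesis by (rule power2_le_imp_le) simp
  qed
  then have "norm ((T ^^ N) z0 - p) \<le> exp (- \<kappa> / 4) ^ N * norm (z0 - p)"
    by (rule norm_funpow_le) simp
  also have "exp (- \<kappa> / 4) ^ N \<le> exp (- l)"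
  proof -
    have "l \<le> \<kappa> / 4 * N" using N \<kappa> \<open>0 < L\<close> by (simp add: \<kappa>_def field_simps)
    then show ?thesis by (simp add: mult.commute flip: exp_of_nat_mult)
  qed
  finally show ?thesis
    by (simp add: FBF_def Let_def T_def mult_right_mono)
qed

section \<open>The inexact Krasnoselskii-Mann iteration\<close>

definition weak_minty :: "('a::real_inner \<Rightarrow> 'a set) \<Rightarrow> real \<Rightarrow> 'a \<Rightarrow> bool" where
  "weak_minty M \<rho> xs \<longleftrightarrow> (\<forall>y u. u \<in> M y \<longrightarrow> inner u (y - xs) \<ge> - \<rho> * (norm u)\<^sup>2)"

lemma km_exact_step_descent:
  fixes M :: "'a::real_inner \<Rightarrow> 'a set"
  assumes minty: "weak_minty M \<rho> xs" and p: "p \<in> resolvent (op_scale \<eta> M) x"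
    and "0 < \<eta>" "\<rho> \<le> \<eta>"
  shows "(norm (x + (1 - \<rho> / \<eta>) *\<^sub>R (p - x) - xs))\<^sup>2
          \<le> (norm (x - xs))\<^sup>2 - ((1 - \<rho> / \<eta>) * norm (x - p))\<^sup>2"
proof -
  define \<alpha> where "\<alpha> = 1 - \<rho> / \<eta>"
  define w where "w = x - p"
  have "0 \<le> \<alpha>" using \<open>0 < \<eta>\<close> \<open>\<rho> \<le> \<eta>\<close> by (simp add: \<alpha>_def)
  obtain u where "u \<in> M p" and w: "w = \<eta> *\<^sub>R u"
    using p by (auto simp: resolvent_op_scale_iff w_def)
  then have "- \<rho> * (norm u)\<^sup>2 \<le> inner u (p - xs)" using minty by (auto simp: weak_minty_def)
  then have "\<eta> * (- \<rho> * (norm u)\<^sup>2) \<le> \<eta> * inner u (p - xs)"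
    using \<open>0 < \<eta>\<close> by (intro mult_left_mono) simp_all
  moreover have "\<eta> * (- \<rho> * (norm u)\<^sup>2) = - (\<rho> / \<eta>) * (norm w)\<^sup>2"
    using \<open>0 < \<eta>\<close> by (simp add: w power_mult_distrib power2_eq_square)
  ultimately have "- (\<rho> / \<eta>) * (norm w)\<^sup>2 \<le> inner w (p - xs)" by (simp add: w)
  moreover have "inner w (x - xs) = (norm w)\<^sup>2 + inner w (p - xs)"
    by (simp add: w_def power2_norm_eq_inner inner_diff_right algebra_simps)
  ultimately have "\<alpha> * (norm w)\<^sup>2 \<le> inner w (x - xs)" by (simp add: \<alpha>_def algebra_simps)
  have step: "x + \<alpha> *\<^sub>R (p - x) - xs = (x - xs) - \<alpha> *\<^sub>R w"
    by (simp add: w_def algebra_simps)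
  have "\<alpha> * (\<alpha> * (norm w)\<^sup>2) \<le> \<alpha> * inner w (x - xs)"
    using \<open>\<alpha> * (norm w)\<^sup>2 \<le> inner w (x - xs)\<close> \<open>0 \<le> \<alpha>\<close> by (rule mult_left_mono)
  moreover have "(\<alpha> * norm w)\<^sup>2 = \<alpha> * (\<alpha> * (norm w)\<^sup>2)" by (simp add: power2_eq_square)
  moreover have "(norm (x + \<alpha> *\<^sub>R (p - x) - xs))\<^sup>2
      = (norm (x - xs))\<^sup>2 - 2 * \<alpha> * inner w (x - xs) + (\<alpha> * norm w)\<^sup>2"
    unfolding step power_mult_distrib power2_norm_eq_inner
    by (simp add: inner_diff_left inner_diff_right inner_commute algebra_simps power2_eq_square)
  ultimately show ?thesis unfolding \<alpha>_def[symmetric] w_def[symmetric] by linarith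
qed

lemma perturbed_descent_sq:
  fixes s d t \<delta> d' :: real
  assumes "s\<^sup>2 \<le> d\<^sup>2 - t\<^sup>2" "0 \<le> s" "0 \<le> t" "0 \<le> d" "0 \<le> \<delta>" "0 \<le> d'" "d' \<le> s + \<delta> * t"
  shows "d'\<^sup>2 \<le> (1 + \<delta>)\<^sup>2 * d\<^sup>2 - t\<^sup>2"
proof -
  have "s\<^sup>2 \<le> d\<^sup>2" "t\<^sup>2 \<le> d\<^sup>2" using assms(1) zero_le_power2[of s] zero_le_power2[of t] by linarith+
  then have "s \<le> d" "t \<le> d" using power2_le_imp_le assms(4) by blast+
  then have "s * t \<le> d * d" "t * t \<le> d * d" using assms(2,3) by (simp_all add: mult_mono)
  have "d'\<^sup>2 \<le> (s + \<delta> * t)\<^sup>2" using assms(6,7) by (simp add: power_mono)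
  also have "\<dots> = s\<^sup>2 + 2 * \<delta> * (s * t) + \<delta>\<^sup>2 * (t * t)" by (simp add: power2_eq_square algebra_simps)
  also have "\<dots> \<le> s\<^sup>2 + 2 * \<delta> * (d * d) + \<delta>\<^sup>2 * (d * d)"
    using \<open>s * t \<le> d * d\<close> \<open>t * t \<le> d * d\<close> \<open>0 \<le> \<delta>\<close>
    by (intro add_mono mult_left_mono) simp_all
  also have "\<dots> \<le> (1 + \<delta>)\<^sup>2 * d\<^sup>2 - t\<^sup>2" using assms(1) by (simp add: power2_eq_square algebra_simps)
  finally show ?thesis .
qed

lemma telescoping_weighted_descent:
  fixes d t \<delta> :: "nat \<Rightarrow> real"
  assumes \<delta>: "\<And>k. 0 \<le> \<delta> k" and step: "\<And>k. (d (Suc k))\<^sup>2 \<le> (1 + \<delta> k)\<^sup>2 * (d k)\<^sup>2 - (t k)\<^sup>2"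
  shows "(d K)\<^sup>2 / (\<Prod>j<K. 1 + \<delta> j)\<^sup>2 + (\<Sum>k<K. (t k)\<^sup>2 / (\<Prod>j<Suc k. 1 + \<delta> j)\<^sup>2) \<le> (d 0)\<^sup>2"
proof (induction K)
  case (Suc K)
  define P where "P = (\<Prod>j<K. 1 + \<delta> j)"
  have pos: "0 < 1 + \<delta> j" for j using \<delta>[of j] by linarith
  then have "0 < P" unfolding P_def by (intro prod_pos) simp
  have "(d (Suc K))\<^sup>2 / (P * (1 + \<delta> K))\<^sup>2 \<le> ((1 + \<delta> K)\<^sup>2 * (d K)\<^sup>2 - (t K)\<^sup>2) / (P * (1 + \<delta> K))\<^sup>2"
    using step by (rule divide_right_mono) simp
  also have "\<dots> = (d K)\<^sup>2 / P\<^sup>2 - (t K)\<^sup>2 / (P * (1 + \<delta> K))\<^sup>2"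
    using pos[of K] by (simp add: power_mult_distrib diff_divide_distrib)
  finally show ?case using Suc.IH by (simp add: P_def[symmetric] mult.commute)
qed simp

lemma sum_sq_le_of_descent_with_summable_errors:
  fixes d t \<delta> :: "nat \<Rightarrow> real"
  assumes \<delta>: "\<And>k. 0 \<le> \<delta> k" and step: "\<And>k. (d (Suc k))\<^sup>2 \<le> (1 + \<delta> k)\<^sup>2 * (d k)\<^sup>2 - (t k)\<^sup>2"
    and summable: "(\<Sum>k<K. \<delta> k) \<le> 1"
  shows "(\<Sum>k<K. (t k)\<^sup>2) \<le> exp 2 * (d 0)\<^sup>2"
proof -
  have "(t k)\<^sup>2 / exp 2 \<le> (t k)\<^sup>2 / (\<Prod>j<Suc k. 1 + \<delta> j)\<^sup>2" if "k < K" for k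
  proof -
    define P where "P = (\<Prod>j<Suc k. 1 + \<delta> j)"
    have "1 \<le> P" unfolding P_def using \<delta> by (intro prod_ge_1) simp
    have "P \<le> (\<Prod>j<Suc k. exp (\<delta> j))"
      unfolding P_def using \<delta> exp_ge_add_one_self
      by (intro prod_mono) (simp add: add_nonneg_nonneg add.commute)
    also have "\<dots> = exp (\<Sum>j<Suc k. \<delta> j)" by (rule exp_sum[symmetric]) simp
    also have "\<dots> \<le> exp 1"
    proof -
      have "(\<Sum>j<Suc k. \<delta> j) \<le> (\<Sum>j<K. \<delta> j)" using that \<delta> by (intro sum_mono2) auto
      then show ?thesis using summable by simp
    qed
    finally have "P\<^sup>2 \<le> (exp 1)\<^sup>2" using \<open>1 \<le> P\<close> by (intro power_mono) simp_all
    also have "(exp 1)\<^sup>2 = exp (2::real)" by (simp add: power2_eq_square flip: exp_add)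
    finally have "P\<^sup>2 \<le> exp 2" .
    with \<open>1 \<le> P\<close> show ?thesis unfolding P_def[symmetric] by (intro divide_left_mono) simp_all
  qed
  then have "(\<Sum>k<K. (t k)\<^sup>2) / exp 2 \<le> (\<Sum>k<K. (t k)\<^sup>2 / (\<Prod>j<Suc k. 1 + \<delta> j)\<^sup>2)"
    unfolding sum_divide_distrib by (intro sum_mono) simp
  also have "\<dots> \<le> (d 0)\<^sup>2"
  proof -
    have "0 \<le> (d K)\<^sup>2 / (\<Prod>j<K. 1 + \<delta> j)\<^sup>2" by simp
    then show ?thesis using telescoping_weighted_descent[of \<delta> d t K, OF \<delta> step] by linarith
  qed
  finally show ?thesis by (simp add: divide_le_eq mult.commute)
qed

lemma ex_le_average:
  fixes f :: "nat \<Rightarrow> real"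
  assumes "0 < K"
  shows "\<exists>k<K. real K * f k \<le> (\<Sum>k<K. f k)"
proof (rule ccontr)
  assume "\<not> ?thesis"
  then have "(\<Sum>k<K. (\<Sum>k<K. f k)) < (\<Sum>k<K. real K * f k)"
    using assms by (intro sum_strict_mono) auto
  then show False by (simp add: sum_distrib_left)
qed

lemma inexact_km_step_descent:
  fixes M :: "'a::real_inner \<Rightarrow> 'a set"
  assumes minty: "weak_minty M \<rho> xs" and p: "p \<in> resolvent (op_scale \<eta> M) x"
    and "0 < \<eta>" "\<rho> \<le> \<eta>" and err: "norm (z - p) \<le> \<delta> * norm (x - p)" and "0 \<le> \<delta>"
  shows "(norm (x + (1 - \<rho> / \<eta>) *\<^sub>R (z - x) - xs))\<^sup>2
          \<le> (1 + \<delta>)\<^sup>2 * (norm (x - xs))\<^sup>2 - ((1 - \<rho> / \<eta>) * norm (x - p))\<^sup>2"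
proof (rule perturbed_descent_sq)
  define \<alpha> where "\<alpha> = 1 - \<rho> / \<eta>"
  have "0 \<le> \<alpha>" using \<open>0 < \<eta>\<close> \<open>\<rho> \<le> \<eta>\<close> by (simp add: \<alpha>_def)
  define s where "s = norm (x + \<alpha> *\<^sub>R (p - x) - xs)"
  show "s\<^sup>2 \<le> (norm (x - xs))\<^sup>2 - (\<alpha> * norm (x - p))\<^sup>2"
    unfolding s_def \<alpha>_def by (rule km_exact_step_descent[OF minty p \<open>0 < \<eta>\<close> \<open>\<rho> \<le> \<eta>\<close>])
  have split: "x + \<alpha> *\<^sub>R (z - x) - xs = (x + \<alpha> *\<^sub>R (p - x) - xs) + \<alpha> *\<^sub>R (z - p)"
    by (simp add: algebra_simps)
  have "norm (x + \<alpha> *\<^sub>R (z - x) - xs) \<le> s + norm (\<alpha> *\<^sub>R (z - p))"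
    unfolding s_def split by (rule norm_triangle_ineq)
  also have "\<dots> = s + \<alpha> * norm (z - p)" using \<open>0 \<le> \<alpha>\<close> by simp
  also have "\<dots> \<le> s + \<delta> * (\<alpha> * norm (x - p))"
    using mult_left_mono[OF err \<open>0 \<le> \<alpha>\<close>] by (simp add: mult.left_commute)
  finally show "norm (x + \<alpha> *\<^sub>R (z - x) - xs) \<le> s + \<delta> * (\<alpha> * norm (x - p))" .
  show "0 \<le> \<alpha> * norm (x - p)" using \<open>0 \<le> \<alpha>\<close> by simp
qed (use \<open>0 \<le> \<delta>\<close> in simp_all)

lemma le_of_count_mult_sq_le:
  fixes r \<epsilon> c a :: real
  assumes "0 < c" "0 < \<epsilon>" "0 < K" and count: "a / (c\<^sup>2 * \<epsilon>\<^sup>2) \<le> K" and "K * (c * r)\<^sup>2 \<le> a"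
  shows "r \<le> \<epsilon>"
proof -
  have "K * (c * r)\<^sup>2 \<le> K * (c * \<epsilon>)\<^sup>2"
    using count assms(1,2,5) by (simp add: divide_le_eq power_mult_distrib mult.commute)
  then have "(c * r)\<^sup>2 \<le> (c * \<epsilon>)\<^sup>2" by (rule mult_left_le_imp_le) (use \<open>0 < K\<close> in simp)
  then have "c * r \<le> c * \<epsilon>" by (rule power2_le_imp_le) (use assms(1,2) in simp)
  then show ?thesis by (rule mult_left_le_imp_le) (use \<open>0 < c\<close> in simp)
qed

theorem inexact_km_small_residual:
  fixes M :: "'a::real_inner \<Rightarrow> 'a set"
  assumes minty: "weak_minty M \<rho> xs" and "0 < \<eta>" "\<rho> < \<eta>"
    and p: "\<And>k. p k \<in> resolvent (op_scale \<eta> M) (x k)"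
    and step: "\<And>k. x (Suc k) = x k + (1 - \<rho> / \<eta>) *\<^sub>R (z k - x k)"
    and err: "\<And>k. norm (z k - p k) \<le> \<delta> k * norm (x k - p k)"
    and \<delta>: "\<And>k. 0 \<le> \<delta> k" "(\<Sum>k<K. \<delta> k) \<le> 1" and "0 < K"
  shows "\<exists>k<K. real K * ((\<eta> - \<rho>) * (norm (x k - p k) / \<eta>))\<^sup>2 \<le> 11 * (norm (x 0 - xs))\<^sup>2"
proof -
  define t where "t k = (1 - \<rho> / \<eta>) * norm (x k - p k)" for k
  have "(\<Sum>k<K. (t k)\<^sup>2) \<le> exp 2 * (norm (x 0 - xs))\<^sup>2"
  proof (rule sum_sq_le_of_descent_with_summable_errors[OF \<delta>(1) _ \<delta>(2)])
    show "(norm (x (Suc k) - xs))\<^sup>2 \<le> (1 + \<delta> k)\<^sup>2 * (norm (x k - xs))\<^sup>2 - (t k)\<^sup>2" for k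
      unfolding step t_def using \<open>0 < \<eta>\<close> \<open>\<rho> < \<eta>\<close> \<delta>(1)
      by (intro inexact_km_step_descent[OF minty p _ _ err]) simp_all
  qed
  also have "\<dots> \<le> 11 * (norm (x 0 - xs))\<^sup>2"
  proof -
    have "exp (2::real) = (exp 1)\<^sup>2" by (simp add: power2_eq_square flip: exp_add)
    also have "\<dots> \<le> (272 / 100)\<^sup>2" using e_less_272 by (intro power_mono) simp_all
    also have "\<dots> \<le> 11" by (simp add: power2_eq_square)
    finally show ?thesis by (intro mult_right_mono) simp_all
  qed
  finally have sum_bound: "(\<Sum>k<K. (t k)\<^sup>2) \<le> 11 * (norm (x 0 - xs))\<^sup>2" .
  obtain k where "k < K" and "real K * (t k)\<^sup>2 \<le> (\<Sum>k<K. (t k)\<^sup>2)"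
    using ex_le_average[OF \<open>0 < K\<close>, of "\<lambda>k. (t k)\<^sup>2"] by blast
  moreover have residual: "(\<eta> - \<rho>) * (norm (x k - p k) / \<eta>) = t k"
    using \<open>0 < \<eta>\<close> by (simp add: t_def field_simps)
  ultimately have "real K * ((\<eta> - \<rho>) * (norm (x k - p k) / \<eta>))\<^sup>2 \<le> 11 * (norm (x 0 - xs))\<^sup>2"
    using sum_bound unfolding residual by linarith
  then show ?thesis using \<open>k < K\<close> by blast
qed

section \<open>Inner tolerances and oracle complexity\<close>

lemma inverse_mult_ln_squared_le_telescoping:
  fixes n :: nat
  assumes "1 \<le> n"
  shows "1 / ((real n + 1) * (ln (real n + 2))\<^sup>2) \<le> 2 * (1 / ln (real n + 1) - 1 / ln (real n + 2))"
proof -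
  define a where "a = ln (real n + 1)"
  define b where "b = ln (real n + 2)"
  have "0 < a" "a \<le> b" using assms by (simp_all add: a_def b_def)
  have "ln ((real n + 1) / (real n + 2)) \<le> (real n + 1) / (real n + 2) - 1"
    by (rule ln_le_minus_one) simp
  then have gap: "1 / (real n + 2) \<le> b - a"
    by (simp add: a_def b_def ln_div field_simps)
  have "1 / ((real n + 1) * b\<^sup>2) \<le> 2 * (1 / ((real n + 2) * b\<^sup>2))"
  proof -
    have "0 < (real n + 1) * b\<^sup>2" "0 < (real n + 2) * b\<^sup>2" using \<open>0 < a\<close> \<open>a \<le> b\<close> by simp_all
    moreover have "(real n + 2) * b\<^sup>2 \<le> 2 * ((real n + 1) * b\<^sup>2)" by (simp add: algebra_simps)
    ultimately show ?thesis by (simp add: field_simps)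
  qed
  also have "1 / ((real n + 2) * b\<^sup>2) \<le> (b - a) / (b * b)"
    using gap \<open>0 < a\<close> \<open>a \<le> b\<close> by (simp add: power2_eq_square divide_right_mono flip: divide_divide_eq_left)
  also have "(b - a) / (b * b) \<le> (b - a) / (a * b)"
    using \<open>0 < a\<close> \<open>a \<le> b\<close> by (intro divide_left_mono mult_right_mono) auto
  also have "(b - a) / (a * b) = 1 / a - 1 / b" using \<open>0 < a\<close> \<open>a \<le> b\<close> by (simp add: field_simps)
  finally show ?thesis by (simp add: a_def b_def)
qed

lemma sum_inverse_mult_ln_squared_le:
  fixes n :: nat
  assumes "1 \<le> n"
  shows "(\<Sum>k<n. 1 / ((real k + 1) * (ln (real k + 2))\<^sup>2)) \<le> 1 / (ln 2)\<^sup>2 + 2 / ln 2 - 2 / ln (real n + 1)"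
  using assms
proof (induction n rule: dec_induct)
  case (step n)
  then show ?case
    using inverse_mult_ln_squared_le_telescoping[OF step.hyps(1)] by (simp add: algebra_simps)
qed simp

text \<open>The relative accuracy \<delta>_k of the k-th inner solve: inner_iters is
  \<lceil>4 (1 + \<eta>L)/(1 - \<eta>L) ln (1/\<delta>_k)\<rceil>.\<close>

definition inner_tolerance :: "nat \<Rightarrow> real" where
  "inner_tolerance k = 1 / (8 * real (k + 1) * (ln (real (k + 2)))\<^sup>2)"

lemma one_le_inverse_inner_tolerance: "1 \<le> 8 * real (k + 1) * (ln (real (k + 2)))\<^sup>2"
proof -
  have "ln 2 \<le> ln (real (k + 2))" by simp
  then have "2/3 \<le> ln (real (k + 2))" using ln2_ge_two_thirds by linarith
  then have "(2/3)\<^sup>2 \<le> (ln (real (k + 2)))\<^sup>2" by (rule power_mono) simp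
  moreover have "1 \<le> real (k + 1)" by simp
  ultimately have "1 * (2/3)\<^sup>2 \<le> real (k + 1) * (ln (real (k + 2)))\<^sup>2"
    by (intro mult_mono) auto
  then have "4/9 \<le> real (k + 1) * (ln (real (k + 2)))\<^sup>2" by (simp add: power2_eq_square)
  then show ?thesis by linarith
qed

lemma inner_tolerance_pos: "0 < inner_tolerance k"
  using one_le_inverse_inner_tolerance[of k] by (simp add: inner_tolerance_def)

lemma sum_inner_tolerance_le_1: "(\<Sum>k<n. inner_tolerance k) \<le> 1"
proof (cases "n = 0")
  case False
  have "ln (2::real) \<ge> 2/3" by (rule ln2_ge_two_thirds)
  then have "1 / (ln (2::real))\<^sup>2 \<le> 9/4" "2 / ln (2::real) \<le> 3"
    using power_mono[of "2/3" "ln (2::real)" 2] by (simp_all add: field_simps)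
  moreover have "0 \<le> 2 / ln (real n + 1)" by simp
  ultimately have "(\<Sum>k<n. 1 / ((real k + 1) * (ln (real k + 2))\<^sup>2)) \<le> 8"
    using sum_inverse_mult_ln_squared_le[of n] False by linarith
  moreover have "(\<Sum>k<n. inner_tolerance k) = (\<Sum>k<n. 1 / ((real k + 1) * (ln (real k + 2))\<^sup>2)) / 8"
    unfolding sum_divide_distrib inner_tolerance_def by (intro sum.cong) (simp_all add: add.commute)
  ultimately show ?thesis by simp
qed simp

lemma inner_iters_ge:
  "4 * (1 + \<eta> * L) / (1 - \<eta> * L) * ln (1 / inner_tolerance k) \<le> real (inner_iters \<eta> L k)"
  unfolding inner_iters_def inner_tolerance_def by (simp add: real_nat_ceiling_ge)

lemma sum_inner_iters_le:
  assumes "0 \<le> \<eta> * L" "\<eta> * L < 1"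
  shows "real (\<Sum>k<K. inner_iters \<eta> L k)
          \<le> real K * (1 + 4 * (1 + \<eta> * L) / (1 - \<eta> * L) * ln (8 * real K * (ln (real K + 1))\<^sup>2))"
proof -
  define c where "c = 4 * (1 + \<eta> * L) / (1 - \<eta> * L)"
  have "0 \<le> c" using assms by (simp add: c_def)
  have "real (inner_iters \<eta> L k) \<le> 1 + c * ln (8 * real K * (ln (real K + 1))\<^sup>2)" if "k < K" for k
  proof -
    have "0 \<le> c * ln (8 * real (k + 1) * (ln (real (k + 2)))\<^sup>2)"
      using \<open>0 \<le> c\<close> one_le_inverse_inner_tolerance[of k] by simp
    then have "real (inner_iters \<eta> L k) \<le> c * ln (8 * real (k + 1) * (ln (real (k + 2)))\<^sup>2) + 1"
      unfolding inner_iters_def c_def by linarith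
    moreover have "8 * real (k + 1) * (ln (real (k + 2)))\<^sup>2 \<le> 8 * real K * (ln (real K + 1))\<^sup>2"
      using that by (intro mult_mono power_mono) auto
    then have "ln (8 * real (k + 1) * (ln (real (k + 2)))\<^sup>2) \<le> ln (8 * real K * (ln (real K + 1))\<^sup>2)"
      using one_le_inverse_inner_tolerance[of k] by (subst ln_le_cancel_iff) auto
    ultimately show ?thesis using \<open>0 \<le> c\<close> by (smt (verit) mult_left_mono)
  qed
  then have "(\<Sum>k<K. real (inner_iters \<eta> L k)) \<le> (\<Sum>k<K. 1 + c * ln (8 * real K * (ln (real K + 1))\<^sup>2))"
    by (intro sum_mono) simp
  then show ?thesis by (simp add: c_def)
qed

lemma FBF_inner_error:
  fixes F :: "'a::euclidean_space \<Rightarrow> 'a"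
  assumes lip: "L-lipschitz_on UNIV F" and max: "maximal_monotone G" and "0 < \<eta>" "\<eta> * L < 1"
    and p: "p \<in> resolvent (op_scale \<eta> (op_plus F G)) x"
  shows "norm (FBF x (inner_iters \<eta> L k) (op_scale \<eta> G) (\<lambda>y. y + \<eta> *\<^sub>R F y) (1 + \<eta> * L) - p)
          \<le> inner_tolerance k * norm (x - p)"
proof -
  have lip\<eta>: "(\<eta> * L)-lipschitz_on UNIV (\<lambda>y. \<eta> *\<^sub>R F y)"
    using lipschitz_on_cmult_nonneg[OF lip] \<open>0 < \<eta>\<close> by simp
  have "0 \<le> \<eta> * L" using lipschitz_on_nonneg[OF lip\<eta>] .
  have "norm (FBF x (inner_iters \<eta> L k) (op_scale \<eta> G) (\<lambda>y. y + \<eta> *\<^sub>R F y) (1 + \<eta> * L) - p)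
      \<le> exp (- ln (1 / inner_tolerance k)) * norm (x - p)"
  proof (rule FBF_linear_convergence)
    show "maximal_monotone (op_scale \<eta> G)" using max \<open>0 < \<eta>\<close> by (rule maximal_monotone_op_scale)
    show "(1 + \<eta> * L)-lipschitz_on UNIV (\<lambda>y. y + \<eta> *\<^sub>R F y)"
      by (rule lipschitz_on_add[OF lipschitz_on_id lip\<eta>])
    show "(1 - \<eta> * L) * (norm (a - b))\<^sup>2 \<le> inner ((a + \<eta> *\<^sub>R F a) - (b + \<eta> *\<^sub>R F b)) (a - b)" for a b
      by (rule strongly_monotone_id_plus_lipschitz[OF lip\<eta>])
    show "x - (p + \<eta> *\<^sub>R F p) \<in> op_scale \<eta> G p"
      using p by (simp add: op_scale_op_plus resolvent_op_plus_iff diff_diff_eq)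
    show "4 * (1 + \<eta> * L) / (1 - \<eta> * L) * ln (1 / inner_tolerance k) \<le> real (inner_iters \<eta> L k)"
      by (rule inner_iters_ge)
  qed (use \<open>0 \<le> \<eta> * L\<close> \<open>\<eta> * L < 1\<close> in auto)
  moreover have "exp (- ln (1 / inner_tolerance k)) = inner_tolerance k"
    using inner_tolerance_pos[of k] by (simp add: ln_div)
  ultimately show ?thesis by simp
qed

theorem inexact_km_fbf_small_residual:
  fixes F :: "'a::euclidean_space \<Rightarrow> 'a"
  assumes lip: "L-lipschitz_on UNIV F" and max: "maximal_monotone G"
    and minty: "weak_minty (op_plus F G) \<rho> xs" and "0 < \<eta>" "\<rho> < \<eta>" "\<eta> * L < 1"
    and step: "\<And>k. x (Suc k) = x k + (1 - \<rho> / \<eta>) *\<^sub>R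
        (FBF (x k) (inner_iters \<eta> L k) (op_scale \<eta> G) (\<lambda>y. y + \<eta> *\<^sub>R F y) (1 + \<eta> * L) - x k)"
    and "0 < K"
  shows "\<exists>k<K. real K * ((\<eta> - \<rho>) * (norm (x k - resolvent_pt (op_scale \<eta> (op_plus F G)) (x k)) / \<eta>))\<^sup>2
           \<le> 11 * (norm (x 0 - xs))\<^sup>2"
proof (rule inexact_km_small_residual[where p = "\<lambda>k. resolvent_pt (op_scale \<eta> (op_plus F G)) (x k)"
      and \<delta> = inner_tolerance
      and z = "\<lambda>k. FBF (x k) (inner_iters \<eta> L k) (op_scale \<eta> G) (\<lambda>y. y + \<eta> *\<^sub>R F y) (1 + \<eta> * L)"])
  show p: "resolvent_pt (op_scale \<eta> (op_plus F G)) (x k) \<in> resolvent (op_scale \<eta> (op_plus F G)) (x k)" for k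
    using resolvent_op_scale_op_plus_eq[OF lip max \<open>0 < \<eta>\<close> \<open>\<eta> * L < 1\<close>] by blast
  show "norm (FBF (x k) (inner_iters \<eta> L k) (op_scale \<eta> G) (\<lambda>y. y + \<eta> *\<^sub>R F y) (1 + \<eta> * L)
        - resolvent_pt (op_scale \<eta> (op_plus F G)) (x k))
      \<le> inner_tolerance k * norm (x k - resolvent_pt (op_scale \<eta> (op_plus F G)) (x k))" for k
    by (rule FBF_inner_error[OF lip max \<open>0 < \<eta>\<close> \<open>\<eta> * L < 1\<close> p])
qed (simp_all add: minty \<open>0 < \<eta>\<close> \<open>\<rho> < \<eta>\<close> step \<open>0 < K\<close> less_imp_le[OF inner_tolerance_pos]
      sum_inner_tolerance_le_1)

theorem corollary3p2:
  fixes F :: "'a::euclidean_space \<Rightarrow> 'a"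
    and G :: "'a \<Rightarrow> 'a set"
    and L \<eta> \<rho> \<epsilon> :: real
    and xs x0 :: 'a
    and x :: "nat \<Rightarrow> 'a"
  assumes Flip: "L-lipschitz_on UNIV F"
    and Gmax: "maximal_monotone G"
    and xs_sol: "0 \<in> op_plus F G xs"
    and xs_weak_minty: "\<forall>y u. u \<in> op_plus F G y \<longrightarrow> inner u (y - xs) \<ge> - \<rho> * (norm u)\<^sup>2"
    and rho_pos: "\<rho> > 0"
    and eta_L: "\<eta> * L < 1"
    and rho_eta: "\<rho> < \<eta>"
    and x_init: "x 0 = x0"
    and x_step: "\<forall>k. x (Suc k) =
                   (1 - (1 - \<rho> / \<eta>)) *\<^sub>R x k
                   + (1 - \<rho> / \<eta>) *\<^sub>R
                       FBF (x k) (inner_iters \<eta> L k) (op_scale \<eta> G)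
                           (\<lambda>y. y + \<eta> *\<^sub>R F y) (1 + \<eta> * L)"
    and eps_pos: "\<epsilon> > 0"
  shows "\<exists>K::nat. 1 \<le> K
     \<and> real K \<le> max 1 \<lceil>11 * (norm (x0 - xs))\<^sup>2 / ((\<eta> - \<rho>)\<^sup>2 * \<epsilon>\<^sup>2)\<rceil>
     \<and> (\<exists>k<K. resolvent (op_scale \<eta> (op_plus F G)) (x k) \<noteq> {}
              \<and> (\<forall>j \<in> resolvent (op_scale \<eta> (op_plus F G)) (x k).
                    norm (x k - j) / \<eta> \<le> \<epsilon>))
     \<and> (let B = max 1 \<lceil>11 * (norm (x0 - xs))\<^sup>2 / ((\<eta> - \<rho>)\<^sup>2 * \<epsilon>\<^sup>2)\<rceil>
        in real (\<Sum>k<K. inner_iters \<eta> L k)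
             \<le> real_of_int B * (1 + 4 * (1 + \<eta> * L) / (1 - \<eta> * L)
                   * ln (8 * real_of_int B * (ln (real_of_int B + 1))\<^sup>2)))"
proof -
  have "0 < \<eta>" using rho_pos rho_eta by linarith
  define J where "J = resolvent_pt (op_scale \<eta> (op_plus F G))"
  have J: "resolvent (op_scale \<eta> (op_plus F G)) y = {J y}" for y
    unfolding J_def by (rule resolvent_op_scale_op_plus_eq[OF Flip Gmax \<open>0 < \<eta>\<close> eta_L])
  define B where "B = max 1 \<lceil>11 * (norm (x0 - xs))\<^sup>2 / ((\<eta> - \<rho>)\<^sup>2 * \<epsilon>\<^sup>2)\<rceil>"
  define K where "K = nat B"
  have K: "real K = real_of_int B" "0 < K" by (simp_all add: K_def B_def)
  have minty: "weak_minty (op_plus F G) \<rho> xs" unfolding weak_minty_def by (rule xs_weak_minty)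
  have step: "x (Suc k) = x k + (1 - \<rho> / \<eta>) *\<^sub>R
      (FBF (x k) (inner_iters \<eta> L k) (op_scale \<eta> G) (\<lambda>y. y + \<eta> *\<^sub>R F y) (1 + \<eta> * L) - x k)" for k
    using x_step by (simp add: algebra_simps)
  obtain k where "k < K" and residual:
    "real K * ((\<eta> - \<rho>) * (norm (x k - J (x k)) / \<eta>))\<^sup>2 \<le> 11 * (norm (x0 - xs))\<^sup>2"
    using inexact_km_fbf_small_residual[OF Flip Gmax minty \<open>0 < \<eta>\<close> rho_eta eta_L step \<open>0 < K\<close>]
    unfolding J_def x_init by blast
  have count: "11 * (norm (x0 - xs))\<^sup>2 / ((\<eta> - \<rho>)\<^sup>2 * \<epsilon>\<^sup>2) \<le> real K"
    unfolding K(1) B_def by (meson le_of_int_ceiling max.cobounded2 of_int_le_iff order_trans)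
  have "0 < \<eta> - \<rho>" "0 < real K" using rho_eta K(2) by simp_all
  then have "norm (x k - J (x k)) / \<eta> \<le> \<epsilon>"
    using le_of_count_mult_sq_le[OF _ eps_pos _ count residual] by blast
  moreover have "real (\<Sum>k<K. inner_iters \<eta> L k) \<le> real_of_int B * (1 + 4 * (1 + \<eta> * L) / (1 - \<eta> * L)
      * ln (8 * real_of_int B * (ln (real_of_int B + 1))\<^sup>2))"
    using sum_inner_iters_le[OF _ eta_L, of K] lipschitz_on_nonneg[OF Flip] \<open>0 < \<eta>\<close> K(1) by simp
  ultimately show ?thesis
    unfolding Let_def B_def[symmetric] J using \<open>k < K\<close> K by (intro exI[of _ K]) auto
qed

end
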